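(* Let $x_1,\dots,x_m\in\mathbb{R}^n$ and $r_1,\dots,r_m\in\mathbb{R}^n$ be arbitrary vectors with $r_1,\dots,r_m$ affinely independent. Let $\Delta x_i=x_{i+1}-x_i$, $\Delta r_i=r_{i+1}-r_i$ for $i=1,\dots,m-1$, $\Delta X=[\Delta x_1,\dots,\Delta x_{m-1}]$, $\Delta R=[\Delta r_1,\dots,\Delta r_{m-1}]$. Then $\Delta R^{\mathrm T}\Delta R$ is invertible and $$x_1-\Delta X(\Delta R^{\mathrm T}\Delta R)^{-1}\Delta R^{\mathrm T}r_1=\bar x-\Phi\Psi^{+}\bar r,$$ with $\bar x,\bar r,\Phi,\Psi$ as in the context.
   Context: $\bar x=\frac1m\sum_{i=1}^m x_i$, $\bar r=\frac1m\sum_{i=1}^m r_i$, $\Phi=[x_1-\bar x,\dots,x_m-\bar x]\in\mathbb{R}^{n\times m}$, $\Psi=[r_1-\bar r,\dots,r_m-\bar r]\in\mathbb{R}^{n\times m}$, and $\Psi^{+}$ is the Moore–Penrose pseudoinverse of $\Psi$. Vectors $r_1,\dots,r_m$ are affinely independent if $r_2-r_1,\dots,r_m-r_1$ are linearly independent. *)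

theory Defs
  imports "Jordan_Normal_Form.Matrix"
begin

text \<open>Inverse of a square matrix (meaningful when the matrix is invertible).\<close>
definition mat_inv :: "real mat \<Rightarrow> real mat" where
  "mat_inv A = (THE B. B \<in> carrier_mat (dim_row A) (dim_row A) \<and>
                       A * B = 1\<^sub>m (dim_row A) \<and> B * A = 1\<^sub>m (dim_row A))"

definition pinv :: "real mat \<Rightarrow> real mat" where
  "pinv A = (THE B. B \<in> carrier_mat (dim_col A) (dim_row A) \<and>
                    A * B * A = A \<and> B * A * B = B \<and>
                    (A * B)\<^sup>T = A * B \<and> (B * A)\<^sup>T = B * A)"

text \<open>Vectors r 0, ..., r (m-1) in R^n (0-based indexing) are affinely independent:
  r 1 - r 0, ..., r (m-1) - r 0 are linearly independent.\<close>
definition aff_indep :: "nat \<Rightarrow> nat \<Rightarrow> (nat \<Rightarrow> real vec) \<Rightarrow> bool" where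
  "aff_indep n m r \<longleftrightarrow>
     (\<forall>c :: nat \<Rightarrow> real.
        (\<forall>j<n. (\<Sum>i\<in>{1..<m}. c i * ((r i - r 0) $ j)) = 0) \<longrightarrow> (\<forall>i\<in>{1..<m}. c i = 0))"

definition vmean :: "nat \<Rightarrow> nat \<Rightarrow> (nat \<Rightarrow> real vec) \<Rightarrow> real vec" where
  "vmean n m x = vec n (\<lambda>j. (\<Sum>i<m. x i $ j) / real m)"

definition centered :: "nat \<Rightarrow> nat \<Rightarrow> (nat \<Rightarrow> real vec) \<Rightarrow> real mat" where
  "centered n m x = mat_of_cols n (map (\<lambda>i. x i - vmean n m x) [0..<m])"

definition diffmat :: "nat \<Rightarrow> nat \<Rightarrow> (nat \<Rightarrow> real vec) \<Rightarrow> real mat" where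
  "diffmat n m x = mat_of_cols n (map (\<lambda>i. x (Suc i) - x i) [0..<m - 1])"

end

theory Submission
  imports Defs "Jordan_Normal_Form.Determinant"
begin

text \<open>Let \<open>E\<close> be the \<open>m \<times> (m-1)\<close> forward-difference matrix, so that \<open>\<Delta>R = \<Psi> E\<close>, and let
  \<open>C\<close> be the \<open>(m-1) \<times> m\<close> matrix that rebuilds centered data from its differences,
  \<open>\<Psi> = \<Delta>R C\<close>. Then \<open>C E = I\<close> and \<open>E C = I - 1 1\<^sup>T / m\<close> is symmetric. Affine independence
  means that \<open>\<Delta>R\<close> is injective, so \<open>\<Delta>R\<^sup>T \<Delta>R\<close> is invertible and
  \<open>H = (\<Delta>R\<^sup>T \<Delta>R)\<inverse> \<Delta>R\<^sup>T\<close> is a left inverse of \<open>\<Delta>R\<close> with \<open>\<Delta>R H\<close> symmetric. These facts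
  are exactly what is needed for \<open>E H\<close> to satisfy the four Penrose equations of \<open>\<Psi>\<close>, so
  \<open>\<Phi> \<Psi>\<^sup>+ = \<Phi> E H = \<Delta>X H =: G\<close>. Finally \<open>G \<Psi> = \<Delta>X H \<Delta>R C = \<Delta>X C = \<Phi>\<close>, and
  comparing the first columns gives \<open>G (r\<^sub>1 - mean r) = x\<^sub>1 - mean x\<close>, which rearranges to
  the claim.\<close>

lemma mat_inv_eqI:
  fixes A B :: "real mat"
  assumes A: "A \<in> carrier_mat k k" and B: "B \<in> carrier_mat k k"
    and AB: "A * B = 1\<^sub>m k" and BA: "B * A = 1\<^sub>m k"
  shows "mat_inv A = B"
  unfolding mat_inv_def
proof (rule the_equality)
  fix B' assume "B' \<in> carrier_mat (dim_row A) (dim_row A) \<and>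
    A * B' = 1\<^sub>m (dim_row A) \<and> B' * A = 1\<^sub>m (dim_row A)"
  then have B': "B' \<in> carrier_mat k k" and "B' * A = 1\<^sub>m k" using A by auto
  then have "B' = B' * (A * B)" using AB by simp
  also have "\<dots> = B' * A * B" using assoc_mult_mat[OF B' A B] by simp
  finally show "B' = B" using \<open>B' * A = 1\<^sub>m k\<close> B by simp
qed (use assms in auto)

lemma invertible_mat_mat_inv:
  fixes A :: "real mat"
  assumes A: "A \<in> carrier_mat k k" and "invertible_mat A"
  shows "mat_inv A \<in> carrier_mat k k" "A * mat_inv A = 1\<^sub>m k" "mat_inv A * A = 1\<^sub>m k"
proof -
  obtain B where AB: "A * B = 1\<^sub>m k" and BA: "B * A = 1\<^sub>m (dim_row B)"
    using assms unfolding invertible_mat_def inverts_mat_def by auto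
  have B: "B \<in> carrier_mat k k"
    using A arg_cong[OF AB, of dim_col] arg_cong[OF BA, of dim_col] by auto
  with BA have "B * A = 1\<^sub>m k" by simp
  then have "mat_inv A = B" using mat_inv_eqI[OF A B AB] by simp
  with B AB \<open>B * A = 1\<^sub>m k\<close>
  show "mat_inv A \<in> carrier_mat k k" "A * mat_inv A = 1\<^sub>m k" "mat_inv A * A = 1\<^sub>m k" by simp_all
qed

lemma gram_mat_invertible:
  fixes R :: "real mat"
  assumes R: "R \<in> carrier_mat n k"
    and ker: "\<And>v. v \<in> carrier_vec k \<Longrightarrow> R *\<^sub>v v = 0\<^sub>v n \<Longrightarrow> v = 0\<^sub>v k"
  shows "invertible_mat (R\<^sup>T * R)"
proof -
  have G: "R\<^sup>T * R \<in> carrier_mat k k" using R by simp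
  have "det (R\<^sup>T * R) \<noteq> 0"
  proof
    assume "det (R\<^sup>T * R) = 0"
    then obtain v where v: "v \<in> carrier_vec k" "v \<noteq> 0\<^sub>v k" and "(R\<^sup>T * R) *\<^sub>v v = 0\<^sub>v k"
      using det_0_iff_vec_prod_zero[OF G] by blast
    then have "R\<^sup>T *\<^sub>v (R *\<^sub>v v) = 0\<^sub>v k" using R by simp
    then have "(R *\<^sub>v v) \<bullet> (R *\<^sub>v v) = 0"
      using transpose_vec_mult_scalar[OF R v(1), of "R *\<^sub>v v"] R v(1) by simp
    then have "R *\<^sub>v v = 0\<^sub>v n"
      using conjugate_square_eq_0_vec[of "R *\<^sub>v v" n] R v(1) by simp
    with ker v show False by blast
  qed
  then obtain B where B: "B \<in> carrier_mat k k"
    and "R\<^sup>T * R * B = 1\<^sub>m k" "B * (R\<^sup>T * R) = 1\<^sub>m k"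
    using det_non_zero_imp_unit[OF G, of "()"] unfolding Units_def by (auto simp: ring_mat_simps)
  then have "inverts_mat (R\<^sup>T * R) B" "inverts_mat B (R\<^sup>T * R)"
    unfolding inverts_mat_def using R by auto
  then show ?thesis unfolding invertible_mat_def using G by auto
qed

lemma gram_left_inverse:
  fixes R :: "real mat"
  assumes R: "R \<in> carrier_mat n k" and inv: "invertible_mat (R\<^sup>T * R)"
  defines "H \<equiv> mat_inv (R\<^sup>T * R) * R\<^sup>T"
  shows "H \<in> carrier_mat k n" "H * R = 1\<^sub>m k" "(R * H)\<^sup>T = R * H"
proof -
  have G: "R\<^sup>T * R \<in> carrier_mat k k" using R by simp
  note Ai = invertible_mat_mat_inv[OF G inv]
  have Rt: "R\<^sup>T \<in> carrier_mat k n" using R by simp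
  show "H \<in> carrier_mat k n" unfolding H_def using Ai(1) Rt by simp
  show "H * R = 1\<^sub>m k" unfolding H_def using assoc_mult_mat[OF Ai(1) Rt R] Ai(3) by simp
  have "(mat_inv (R\<^sup>T * R))\<^sup>T = mat_inv (R\<^sup>T * R)"
  proof (rule mat_inv_eqI[OF G, symmetric])
    show "(mat_inv (R\<^sup>T * R))\<^sup>T \<in> carrier_mat k k" using Ai(1) by simp
    show "R\<^sup>T * R * (mat_inv (R\<^sup>T * R))\<^sup>T = 1\<^sub>m k"
      using transpose_mult[OF Ai(1) G] Ai(3) by (simp add: transpose_mult[OF Rt R])
    show "(mat_inv (R\<^sup>T * R))\<^sup>T * (R\<^sup>T * R) = 1\<^sub>m k"
      using transpose_mult[OF G Ai(1)] Ai(2) by (simp add: transpose_mult[OF Rt R])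
  qed
  then have "H\<^sup>T = R * mat_inv (R\<^sup>T * R)"
    unfolding H_def using transpose_mult[OF Ai(1) Rt] by simp
  then show "(R * H)\<^sup>T = R * H"
    unfolding transpose_mult[OF R \<open>H \<in> carrier_mat k n\<close>]
    using assoc_mult_mat[OF R Ai(1) Rt] by (simp add: H_def)
qed

text \<open>\<open>M X\<close> is the orthogonal projection onto the column space of \<open>M\<close>, whatever \<open>X\<close> is.\<close>

lemma Penrose_column_projection_unique:
  fixes M X Y :: "real mat"
  assumes M: "M \<in> carrier_mat p q" and X: "X \<in> carrier_mat q p" and Y: "Y \<in> carrier_mat q p"
    and MXM: "M * X * M = M" and MX: "(M * X)\<^sup>T = M * X"
    and MYM: "M * Y * M = M" and MY: "(M * Y)\<^sup>T = M * Y"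
  shows "M * X = M * Y"
proof -
  have MYc: "M * Y \<in> carrier_mat p p" and MXc: "M * X \<in> carrier_mat p p" using M X Y by auto
  have "M * X = M * Y * M * X" by (simp only: MYM)
  also have "\<dots> = (M * Y) * (M * X)" using assoc_mult_mat[OF MYc M X] .
  also have "\<dots> = (M * Y)\<^sup>T * (M * X)\<^sup>T" by (simp only: MX MY)
  also have "\<dots> = (M * X * (M * Y))\<^sup>T" using transpose_mult[OF MXc MYc] by simp
  also have "\<dots> = (M * X * M * Y)\<^sup>T" using assoc_mult_mat[OF MXc M Y] by simp
  also have "\<dots> = M * Y" by (simp only: MXM MY)
  finally show ?thesis .
qed

lemma Penrose_solution_unique:
  fixes M X Y :: "real mat"
  assumes M: "M \<in> carrier_mat p q" and X: "X \<in> carrier_mat q p" and Y: "Y \<in> carrier_mat q p"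
    and X1: "M * X * M = M" and X2: "X * M * X = X" and X3: "(M * X)\<^sup>T = M * X" and X4: "(X * M)\<^sup>T = X * M"
    and Y1: "M * Y * M = M" and Y2: "Y * M * Y = Y" and Y3: "(M * Y)\<^sup>T = M * Y" and Y4: "(Y * M)\<^sup>T = Y * M"
  shows "X = Y"
proof -
  have MX_MY: "M * X = M * Y"
    using Penrose_column_projection_unique[OF M X Y X1 X3 Y1 Y3] .
  have transposed: "M\<^sup>T * Z\<^sup>T * M\<^sup>T = M\<^sup>T" "(M\<^sup>T * Z\<^sup>T)\<^sup>T = M\<^sup>T * Z\<^sup>T"
    if Z: "Z \<in> carrier_mat q p" and "M * Z * M = M" "(Z * M)\<^sup>T = Z * M" for Z
  proof -
    have "M\<^sup>T * Z\<^sup>T * M\<^sup>T = M\<^sup>T * (M * Z)\<^sup>T"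
      using assoc_mult_mat[of "M\<^sup>T" q p "Z\<^sup>T" q "M\<^sup>T" p] transpose_mult[OF M Z] M Z by simp
    also have "\<dots> = (M * Z * M)\<^sup>T" using transpose_mult[OF mult_carrier_mat[OF M Z] M] by simp
    finally show "M\<^sup>T * Z\<^sup>T * M\<^sup>T = M\<^sup>T" using that by simp
    show "(M\<^sup>T * Z\<^sup>T)\<^sup>T = M\<^sup>T * Z\<^sup>T"
      using that transpose_mult[OF Z M] by simp
  qed
  have "M\<^sup>T * X\<^sup>T = M\<^sup>T * Y\<^sup>T"
    by (rule Penrose_column_projection_unique[of "M\<^sup>T" q p "X\<^sup>T" "Y\<^sup>T"])
      (use transposed X X1 X4 Y Y1 Y4 M in auto)
  then have XM_YM: "X * M = Y * M"
    using transpose_mult[OF X M] transpose_mult[OF Y M] by (metis transpose_transpose)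
  have "X = X * M * X" by (simp only: X2)
  also have "\<dots> = X * (M * Y)" using assoc_mult_mat[OF X M X] MX_MY by simp
  also have "\<dots> = Y * M * Y" using assoc_mult_mat[OF X M Y] XM_YM by simp
  also have "\<dots> = Y" by (simp only: Y2)
  finally show ?thesis .
qed

lemma pinv_eqI:
  fixes M X :: "real mat"
  assumes M: "M \<in> carrier_mat p q" and X: "X \<in> carrier_mat q p"
    and "M * X * M = M" "X * M * X = X" "(M * X)\<^sup>T = M * X" "(X * M)\<^sup>T = X * M"
  shows "pinv M = X"
  unfolding pinv_def
proof (rule the_equality)
  fix Y assume "Y \<in> carrier_mat (dim_col M) (dim_row M) \<and> M * Y * M = M \<and> Y * M * Y = Y \<and>
    (M * Y)\<^sup>T = M * Y \<and> (Y * M)\<^sup>T = Y * M"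
  then show "Y = X" using Penrose_solution_unique[OF M X, of Y] assms by auto
qed (use assms in auto)

lemma pinv_eq_of_factorization:
  fixes P E C H :: "real mat"
  assumes P: "P \<in> carrier_mat n m" and E: "E \<in> carrier_mat m k"
    and C: "C \<in> carrier_mat k m" and H: "H \<in> carrier_mat k n"
    and CE: "C * E = 1\<^sub>m k" and EC: "(E * C)\<^sup>T = E * C" and PEC: "P * E * C = P"
    and HPE: "H * (P * E) = 1\<^sub>m k" and PEH: "(P * E * H)\<^sup>T = P * E * H"
  shows "pinv P = E * H"
proof -
  have PE: "P * E \<in> carrier_mat n k" using P E by simp
  have PB: "P * (E * H) = P * E * H" using assoc_mult_mat[OF P E H] by simp
  have BP: "E * H * P = E * C"
  proof -
    have "E * H * P = E * (H * (P * E * C))" using assoc_mult_mat[OF E H P] PEC by simp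
    also have "H * (P * E * C) = C" using assoc_mult_mat[OF H PE C] HPE C by simp
    finally show ?thesis .
  qed
  show ?thesis
  proof (rule pinv_eqI[OF P])
    show "E * H \<in> carrier_mat m n" using E H by simp
    show "P * (E * H) * P = P"
      using assoc_mult_mat[OF P mult_carrier_mat[OF E H] P] BP PEC assoc_mult_mat[OF P E C] by simp
    have "E * H * P * (E * H) = E * (C * E * H)"
      using BP assoc_mult_mat[OF E C mult_carrier_mat[OF E H]] assoc_mult_mat[OF C E H] by simp
    then show "E * H * P * (E * H) = E * H" using CE H by simp
    show "(P * (E * H))\<^sup>T = P * (E * H)" using PB PEH by simp
    show "(E * H * P)\<^sup>T = E * H * P" using BP EC by simp
  qed
qed

lemma sum_weighted_differences:
  fixes f :: "nat \<Rightarrow> real"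
  shows "(\<Sum>j<K. (real K - real j) * (f (Suc j) - f j)) = (\<Sum>i<Suc K. f i) - real (Suc K) * f 0"
proof (induction K)
  case (Suc K)
  have "(\<Sum>j<Suc K. (real (Suc K) - real j) * (f (Suc j) - f j))
      = (\<Sum>j<K. (real K - real j) * (f (Suc j) - f j)) + (\<Sum>j<Suc K. f (Suc j) - f j)"
    by (simp add: sum.distrib[symmetric] algebra_simps)
  also have "(\<Sum>j<Suc K. f (Suc j) - f j) = f (Suc K) - f 0"
    by (rule sum_lessThan_telescope)
  finally show ?case using Suc by (simp add: algebra_simps)
qed simp

lemma sum_mult_differences_by_parts:
  fixes f w :: "nat \<Rightarrow> real"
  shows "(\<Sum>j<K. w j * (f (Suc j) - f j)) =
    (\<Sum>i\<in>{1..K}. (w (i - 1) - w i) * (f i - f 0)) + w K * (f K - f 0)"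
  by (induction K) (simp_all add: algebra_simps)

definition difference_mat :: "nat \<Rightarrow> real mat" where
  "difference_mat m = mat m (m - 1) (\<lambda>(i, j). of_bool (i = Suc j) - of_bool (i = j))"

text \<open>Column \<open>i\<close> of \<open>\<Delta>X C\<close> is
  \<open>\<Sum>\<^bsub>j<i\<^esub> \<Delta>x\<^sub>j - (1/m) \<Sum>\<^sub>j (m-1-j) \<Delta>x\<^sub>j = (x\<^sub>i - x\<^sub>0) - (mean x - x\<^sub>0) = x\<^sub>i - mean x\<close>.\<close>

definition centered_cumsum_mat :: "nat \<Rightarrow> real mat" where
  "centered_cumsum_mat m = mat (m - 1) m (\<lambda>(j, i). of_bool (j < i) - (real (m - 1) - real j) / real m)"

lemma difference_mat_carrier [simp]:
  "difference_mat m \<in> carrier_mat m (m - 1)"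
  "dim_row (difference_mat m) = m" "dim_col (difference_mat m) = m - 1"
  by (simp_all add: difference_mat_def)

lemma centered_cumsum_mat_carrier [simp]:
  "centered_cumsum_mat m \<in> carrier_mat (m - 1) m"
  "dim_row (centered_cumsum_mat m) = m - 1" "dim_col (centered_cumsum_mat m) = m"
  by (simp_all add: centered_cumsum_mat_def)

lemma diffmat_carrier [simp]:
  "diffmat n m x \<in> carrier_mat n (m - 1)"
  "dim_row (diffmat n m x) = n" "dim_col (diffmat n m x) = m - 1"
  by (auto simp: diffmat_def)

lemma centered_carrier [simp]:
  "centered n m x \<in> carrier_mat n m"
  "dim_row (centered n m x) = n" "dim_col (centered n m x) = m"
  by (auto simp: centered_def)

lemma vmean_carrier [simp]: "vmean n m x \<in> carrier_vec n"
  by (simp add: vmean_def)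

lemma diffmat_index:
  assumes "\<forall>i<m. x i \<in> carrier_vec n" "a < n" "j < m - 1"
  shows "diffmat n m x $$ (a, j) = x (Suc j) $ a - x j $ a"
proof -
  have "dim_vec (x j) = n" using assms by simp
  then show ?thesis using assms(2,3) by (simp add: diffmat_def mat_of_cols_index)
qed

lemma centered_index:
  assumes "a < n" "i < m"
  shows "centered n m x $$ (a, i) = x i $ a - (\<Sum>k<m. x k $ a) / real m"
  using assms by (simp add: centered_def mat_of_cols_index vmean_def)

lemma centered_cumsum_mat_index:
  "j < m - 1 \<Longrightarrow> i < m \<Longrightarrow>
    centered_cumsum_mat m $$ (j, i) = of_bool (j < i) - (real (m - 1) - real j) / real m"
  by (simp add: centered_cumsum_mat_def)

lemma col_centered:
  assumes "\<forall>i<m. x i \<in> carrier_vec n" "i < m"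
  shows "col (centered n m x) i = x i - vmean n m x"
  using assms by (simp add: centered_def vmean_def)

lemma mult_difference_mat_index:
  fixes A :: "real mat"
  assumes A: "A \<in> carrier_mat p m" and "a < p" "j < m - 1"
  shows "(A * difference_mat m) $$ (a, j) = A $$ (a, Suc j) - A $$ (a, j)"
proof -
  have "(A * difference_mat m) $$ (a, j) =
      (\<Sum>i<m. of_bool (i = Suc j) * A $$ (a, i)) - (\<Sum>i<m. of_bool (i = j) * A $$ (a, i))"
    using assms by (simp add: difference_mat_def scalar_prod_def lessThan_atLeast0
        right_diff_distrib sum_subtractf mult.commute)
  then show ?thesis using assms by simp
qed

lemma difference_mat_mult_index:
  fixes B :: "real mat"
  assumes B: "B \<in> carrier_mat (m - 1) q" and "k < m" "i < q"
  shows "(difference_mat m * B) $$ (k, i) =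
    (if 0 < k then B $$ (k - 1, i) else 0) - (if k < m - 1 then B $$ (k, i) else 0)"
proof -
  have "(difference_mat m * B) $$ (k, i) =
      (\<Sum>j<m - 1. of_bool (k = Suc j) * B $$ (j, i)) - (\<Sum>j<m - 1. of_bool (k = j) * B $$ (j, i))"
    using assms by (simp add: difference_mat_def scalar_prod_def lessThan_atLeast0
        right_diff_distrib sum_subtractf mult.commute)
  moreover have "(\<Sum>j<m - 1. of_bool (k = Suc j) * B $$ (j, i)) = (if 0 < k then B $$ (k - 1, i) else 0)"
    using \<open>k < m\<close> by (cases k) simp_all
  ultimately show ?thesis by simp
qed

lemma centered_mult_difference_mat:
  assumes "\<forall>i<m. x i \<in> carrier_vec n"
  shows "centered n m x * difference_mat m = diffmat n m x"
  by (rule eq_matI)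
    (use assms in \<open>simp_all add: mult_difference_mat_index[OF centered_carrier(1)]
        centered_index diffmat_index del: index_mult_mat(1)\<close>)

lemma centered_cumsum_mult_difference_mat: "centered_cumsum_mat m * difference_mat m = 1\<^sub>m (m - 1)"
proof (rule eq_matI)
  fix j l assume "j < dim_row (1\<^sub>m (m - 1) :: real mat)" "l < dim_col (1\<^sub>m (m - 1) :: real mat)"
  then have "j < m - 1" "l < m - 1" by simp_all
  then show "(centered_cumsum_mat m * difference_mat m) $$ (j, l) = 1\<^sub>m (m - 1) $$ (j, l)"
    by (simp add: mult_difference_mat_index[OF centered_cumsum_mat_carrier(1)] del: index_mult_mat(1))
      (simp add: centered_cumsum_mat_def)
qed simp_all

lemma difference_mult_centered_cumsum_mat_index:
  assumes "m \<ge> 1" and ki: "k < m" "i < m"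
  shows "(difference_mat m * centered_cumsum_mat m) $$ (k, i) = of_bool (k = i) - 1 / real m"
proof -
  have entry: "(difference_mat m * centered_cumsum_mat m) $$ (k, i) =
    (if 0 < k then centered_cumsum_mat m $$ (k - 1, i) else 0) -
    (if k < m - 1 then centered_cumsum_mat m $$ (k, i) else 0)"
    using ki by (rule difference_mat_mult_index[OF centered_cumsum_mat_carrier(1)])
  show ?thesis
  proof (cases "0 < k")
    case True
    let ?c = "\<lambda>j. (real (m - 1) - real j) / real m"
    have step: "?c (k - 1) = ?c k + 1 / real m"
      using True by (simp add: of_nat_diff add_divide_distrib[symmetric])
    show ?thesis
    proof (cases "k < m - 1")
      case True
      have "of_bool (k - 1 < i) - of_bool (k < i) = (of_bool (k = i) :: real)"
        using \<open>0 < k\<close> by auto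
      then show ?thesis
        unfolding entry using True \<open>0 < k\<close> ki step by (simp add: centered_cumsum_mat_index)
    next
      case False
      then have "k = m - 1" "of_bool (k - 1 < i) = (of_bool (k = i) :: real)" "?c k = 0"
        using \<open>0 < k\<close> ki by auto
      then show ?thesis
        unfolding entry using False \<open>0 < k\<close> ki step by (simp add: centered_cumsum_mat_index)
    qed
  next
    case False
    have "real (m - 1) / real m = 1 - 1 / real m" using \<open>m \<ge> 1\<close> by (simp add: of_nat_diff field_simps)
    moreover have "of_bool (0 < i) = 1 - (of_bool (0 = i) :: real)" by auto
    ultimately show ?thesis
      unfolding entry using False ki by (cases "m = 1") (simp_all add: centered_cumsum_mat_index)
  qed
qed

lemma difference_mult_centered_cumsum_mat:
  assumes "m \<ge> 1"
  shows "difference_mat m * centered_cumsum_mat m = 1\<^sub>m m - mat m m (\<lambda>_. 1 / real m)"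
  by (rule eq_matI) (simp_all add: difference_mult_centered_cumsum_mat_index[OF assms] del: index_mult_mat(1))

lemma diffmat_mult_centered_cumsum_mat:
  assumes x: "\<forall>i<m. x i \<in> carrier_vec n" and m: "m \<ge> 1"
  shows "diffmat n m x * centered_cumsum_mat m = centered n m x"
proof (rule eq_matI)
  fix a i assume "a < dim_row (centered n m x)" "i < dim_col (centered n m x)"
  then have ai: "a < n" "i < m" by simp_all
  define f where "f k = x k $ a" for k
  have "(diffmat n m x * centered_cumsum_mat m) $$ (a, i) =
      (\<Sum>j<m - 1. of_bool (j < i) * (f (Suc j) - f j) - (real (m - 1) - real j) * (f (Suc j) - f j) / real m)"
    using ai x by (simp add: scalar_prod_def lessThan_atLeast0 diffmat_index centered_cumsum_mat_def
        f_def algebra_simps)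
  also have "\<dots> = (\<Sum>j<i. f (Suc j) - f j) - ((\<Sum>k<m. f k) - real m * f 0) / real m"
  proof -
    have "(\<Sum>j<m - 1. of_bool (j < i) * (f (Suc j) - f j)) = (\<Sum>j<i. f (Suc j) - f j)"
      using ai by (intro sum.mono_neutral_cong_right) auto
    moreover have "(\<Sum>j<m - 1. (real (m - 1) - real j) * (f (Suc j) - f j)) = (\<Sum>k<m. f k) - real m * f 0"
      using sum_weighted_differences[of "m - 1" f] m by simp
    ultimately show ?thesis by (simp add: sum_subtractf sum_divide_distrib[symmetric])
  qed
  also have "\<dots> = f i - (\<Sum>k<m. f k) / real m"
    using m by (simp add: sum_lessThan_telescope field_simps)
  also have "\<dots> = centered n m x $$ (a, i)"
    using ai by (simp add: centered_index f_def)
  finally show "(diffmat n m x * centered_cumsum_mat m) $$ (a, i) = centered n m x $$ (a, i)" .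
qed auto

text \<open>Summation by parts turns \<open>\<Delta>R v\<close> into \<open>\<Sum>\<^sub>i (v\<^sub>i\<^sub>-\<^sub>1 - v\<^sub>i) (r\<^sub>i - r\<^sub>0)\<close>, with \<open>v\<^sub>m\<^sub>-\<^sub>1 = 0\<close>.\<close>

lemma aff_indep_diffmat_injective:
  assumes aff: "aff_indep n m r" and r: "\<forall>i<m. r i \<in> carrier_vec n"
    and v: "v \<in> carrier_vec (m - 1)" and Rv: "diffmat n m r *\<^sub>v v = 0\<^sub>v n"
  shows "v = 0\<^sub>v (m - 1)"
proof -
  define w where "w j = (if j < m - 1 then v $ j else 0)" for j
  have sum_zero: "\<forall>a<n. (\<Sum>i\<in>{1..<m}. (w (i - 1) - w i) * ((r i - r 0) $ a)) = 0"
  proof (intro allI impI)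
    fix a assume a: "a < n"
    define f where "f k = r k $ a" for k
    have "0 = (\<Sum>j<m - 1. w j * (f (Suc j) - f j))"
      using arg_cong[OF Rv, of "\<lambda>u. u $ a"] a v r
      by (simp add: scalar_prod_def lessThan_atLeast0 diffmat_index w_def f_def mult.commute)
    also have "\<dots> = (\<Sum>i\<in>{1..<m}. (w (i - 1) - w i) * (f i - f 0))"
    proof -
      have "w (m - 1) = 0" "{1..m - 1} = {1..<m}" by (auto simp: w_def)
      then show ?thesis using sum_mult_differences_by_parts[of w f "m - 1"] by simp
    qed
    also have "\<dots> = (\<Sum>i\<in>{1..<m}. (w (i - 1) - w i) * ((r i - r 0) $ a))"
      using a r by (intro sum.cong) (auto simp: f_def)
    finally show "(\<Sum>i\<in>{1..<m}. (w (i - 1) - w i) * ((r i - r 0) $ a)) = 0" by simp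
  qed
  have w_pred: "w (i - 1) = w i" if "i \<in> {1..<m}" for i
    using spec[OF aff[unfolded aff_indep_def], of "\<lambda>i. w (i - 1) - w i"] sum_zero that by simp
  have w_zero: "w j = 0" if "j \<le> m - 1" for j
    using that
  proof (induction rule: inc_induct)
    case (step j)
    then show ?case using w_pred[of "Suc j"] by simp
  qed (simp add: w_def)
  have "v $ j = 0" if "j < m - 1" for j
    using w_zero[of j] that by (simp add: w_def)
  then show ?thesis using v by (intro eq_vecI) auto
qed

lemma diffmat_left_inverse_mult_centered:
  assumes x: "\<forall>i<m. x i \<in> carrier_vec n" and r: "\<forall>i<m. r i \<in> carrier_vec n" and m: "m \<ge> 1"
    and H: "H \<in> carrier_mat (m - 1) n" and HR: "H * diffmat n m r = 1\<^sub>m (m - 1)"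
  shows "diffmat n m x * H * centered n m r = centered n m x"
proof -
  have "diffmat n m x * H * centered n m r = diffmat n m x * (H * diffmat n m r) * centered_cumsum_mat m"
    using diffmat_mult_centered_cumsum_mat[OF r m]
      assoc_mult_mat[OF mult_carrier_mat[OF diffmat_carrier(1) H] diffmat_carrier(1)
        centered_cumsum_mat_carrier(1)]
      assoc_mult_mat[OF diffmat_carrier(1) H diffmat_carrier(1)] by simp
  then show ?thesis using HR diffmat_mult_centered_cumsum_mat[OF x m] by simp
qed

lemma pinv_centered_eq:
  assumes r: "\<forall>i<m. r i \<in> carrier_vec n" and m: "m \<ge> 1"
    and H: "H \<in> carrier_mat (m - 1) n" and HR: "H * diffmat n m r = 1\<^sub>m (m - 1)"
    and RH: "(diffmat n m r * H)\<^sup>T = diffmat n m r * H"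
  shows "pinv (centered n m r) = difference_mat m * H"
proof (rule pinv_eq_of_factorization[OF centered_carrier(1) difference_mat_carrier(1)
      centered_cumsum_mat_carrier(1) H centered_cumsum_mult_difference_mat])
  show "(difference_mat m * centered_cumsum_mat m)\<^sup>T = difference_mat m * centered_cumsum_mat m"
    by (rule eq_matI) (auto simp: difference_mult_centered_cumsum_mat[OF m])
qed (simp_all add: centered_mult_difference_mat[OF r] diffmat_mult_centered_cumsum_mat[OF r m] HR RH)

lemma offset_eq_of_mult_centered_eq:
  fixes G :: "real mat"
  assumes G: "G \<in> carrier_mat n n" and GPsi: "G * centered n m r = centered n m x"
    and x: "\<forall>i<m. x i \<in> carrier_vec n" and r: "\<forall>i<m. r i \<in> carrier_vec n" and i: "i < m"
  shows "x i - G *\<^sub>v r i = vmean n m x - G *\<^sub>v vmean n m r"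
proof -
  have ri: "r i \<in> carrier_vec n" and xi: "x i \<in> carrier_vec n" using x r i by simp_all
  have "G *\<^sub>v r i - G *\<^sub>v vmean n m r = x i - vmean n m x"
    using arg_cong[OF GPsi, of "\<lambda>A. col A i"] x r i
    by (simp add: col_mult2[OF G centered_carrier(1) i] col_centered mult_minus_distrib_mat_vec[OF G ri])
  then show ?thesis
    by (intro eq_vecI) (use G xi in \<open>auto simp: vec_eq_iff\<close>)
qed

theorem mainTheorem3:
  fixes n m :: nat and x r :: "nat \<Rightarrow> real vec"
  assumes "m \<ge> 1"
    and "\<forall>i<m. x i \<in> carrier_vec n"
    and "\<forall>i<m. r i \<in> carrier_vec n"
    and "aff_indep n m r"
  shows "invertible_mat ((diffmat n m r)\<^sup>T * diffmat n m r) \<and>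
         x 0 - (diffmat n m x * mat_inv ((diffmat n m r)\<^sup>T * diffmat n m r) * (diffmat n m r)\<^sup>T) *\<^sub>v r 0
           = vmean n m x - (centered n m x * pinv (centered n m r)) *\<^sub>v vmean n m r"
proof -
  let ?R = "diffmat n m r" and ?X = "diffmat n m x"
  have R: "?R \<in> carrier_mat n (m - 1)" and Rt: "?R\<^sup>T \<in> carrier_mat (m - 1) n"
    by (rule diffmat_carrier(1), rule transpose_carrier_mat[THEN iffD2, OF diffmat_carrier(1)])
  have inv: "invertible_mat (?R\<^sup>T * ?R)"
    using gram_mat_invertible[OF R] aff_indep_diffmat_injective assms(3,4) by blast
  define H where "H = mat_inv (?R\<^sup>T * ?R) * ?R\<^sup>T"
  note H = gram_left_inverse[OF R inv, folded H_def]
  have "centered n m x * pinv (centered n m r) = centered n m x * difference_mat m * H"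
    using pinv_centered_eq[OF assms(3,1) H] assoc_mult_mat[OF centered_carrier(1)
        difference_mat_carrier(1) H(1)] by simp
  also have "\<dots> = ?X * H" using centered_mult_difference_mat[OF assms(2)] by simp
  finally have pinv: "centered n m x * pinv (centered n m r) = ?X * H" .
  have "?X * mat_inv (?R\<^sup>T * ?R) * ?R\<^sup>T = ?X * H"
    using assoc_mult_mat[OF diffmat_carrier(1) invertible_mat_mat_inv(1)[OF mult_carrier_mat[OF Rt R] inv] Rt]
    by (simp add: H_def)
  moreover have "x 0 - (?X * H) *\<^sub>v r 0 = vmean n m x - (?X * H) *\<^sub>v vmean n m r"
    by (rule offset_eq_of_mult_centered_eq[OF mult_carrier_mat[OF diffmat_carrier(1) H(1)]
          diffmat_left_inverse_mult_centered[OF assms(2,3,1) H(1,2)] assms(2,3)])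
      (use assms(1) in simp)
  ultimately show ?thesis using inv pinv by simp
qed

end
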